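(* Let $a\ge b\ge2$ and $k$ be integers with $a+b+1\le k\le a+2b-1$. Then for every $(i,j)\in\overline{Q}_3$ we have $w_1,w_4,w_6\in\mathcal{R}^k_{(a,b),(i,j)}$.
   Context: $\widehat{\mathfrak{su}}(3)_k$ fusion. Let $P_+^k=\{(\lambda_1,\lambda_2)\in\mathbb{Z}_{\ge0}^2:\lambda_1+\lambda_2\le k\}$. For $\lambda,\mu,\nu\in P_+^k$ set - $\mathcal{A}=\tfrac13[2(\lambda_1+\mu_1+\nu_2)+\lambda_2+\mu_2+\nu_1]$, - $\mathcal{B}=\tfrac13[\lambda_1+\mu_1+\nu_2+2(\lambda_2+\mu_2+\nu_1)]$, - $k_0^{\max}=\min(\mathcal{A},\mathcal{B})$, - $k_0^{\min}=\max(\lambda_1+\lambda_2,\mu_1+\mu_2,\nu_1+\nu_2,\mathcal{A}-\lambda_1,\mathcal{A}-\mu_1,\mathcal{A}-\nu_2,\mathcal{B}-\lambda_2,\mathcal{B}-\mu_2,\mathcal{B}-\nu_1)$. The fusion multiplicity is $N^{(k)\nu}_{\lambda,\mu}=\min(k_0^{\max},k)-k_0^{\min}+1$ if $\mathcal{A},\mathcal{B}$ are nonnegative integers, $k_0^{\max}\ge k_0^{\min}$ and $k\ge k_0^{\min}$; otherwise it is $0$. The set $\mathcal{R}^k_{\lambda,\mu}$ is $\{\nu\in P_+^k:N^{(k)\nu}_{\lambda,\mu}\ne0\}$. The candidate weights are $w_1=(a-1,b+2)$, $w_2=(a+2,b-1)$, $w_3=(a+1,b-2)$, $w_4=(a-2,b+1)$,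 $w_5=(a+1,b+1)$, $w_6=(a-1,b-1)$. The set $\overline{Q}_3$ is defined by $\overline{Q}_3=\{(p+k-a-b,p-2k+2a+2b):p\in\mathbb{Z},\ 2k-2a-2b\le p\le k-a-1\}$. *)

theory Defs
  imports Main "HOL.Rat"
begin

type_synonym wt = "int \<times> int"

definition Pplus :: "int \<Rightarrow> wt set" where
  "Pplus k = {(l1, l2). 0 \<le> l1 \<and> 0 \<le> l2 \<and> l1 + l2 \<le> k}"

definition fusA :: "wt \<Rightarrow> wt \<Rightarrow> wt \<Rightarrow> rat" where
  "fusA lam mu nu = (2 * of_int (fst lam + fst mu + snd nu) + of_int (snd lam + snd mu + fst nu)) / 3"

definition fusB :: "wt \<Rightarrow> wt \<Rightarrow> wt \<Rightarrow> rat" where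
  "fusB lam mu nu = (of_int (fst lam + fst mu + snd nu) + 2 * of_int (snd lam + snd mu + fst nu)) / 3"

definition k0max :: "wt \<Rightarrow> wt \<Rightarrow> wt \<Rightarrow> rat" where
  "k0max lam mu nu = min (fusA lam mu nu) (fusB lam mu nu)"

definition k0min :: "wt \<Rightarrow> wt \<Rightarrow> wt \<Rightarrow> rat" where
  "k0min lam mu nu = (let A = fusA lam mu nu; B = fusB lam mu nu in
     Max {of_int (fst lam + snd lam), of_int (fst mu + snd mu), of_int (fst nu + snd nu),
          A - of_int (fst lam), A - of_int (fst mu), A - of_int (snd nu),
          B - of_int (snd lam), B - of_int (snd mu), B - of_int (fst nu)})"

definition fusN :: "int \<Rightarrow> wt \<Rightarrow> wt \<Rightarrow> wt \<Rightarrow> rat" where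
  "fusN k lam mu nu = (let A = fusA lam mu nu; B = fusB lam mu nu;
      kmax = k0max lam mu nu; kmin = k0min lam mu nu in
    if A \<in> \<int> \<and> B \<in> \<int> \<and> 0 \<le> A \<and> 0 \<le> B \<and> kmin \<le> kmax \<and> kmin \<le> of_int k
    then min kmax (of_int k) - kmin + 1 else 0)"

definition fusR :: "int \<Rightarrow> wt \<Rightarrow> wt \<Rightarrow> wt set" where
  "fusR k lam mu = {nu \<in> Pplus k. fusN k lam mu nu \<noteq> 0}"

definition Q3bar :: "int \<Rightarrow> int \<Rightarrow> int \<Rightarrow> wt set" where
  "Q3bar a b k = {(p + k - a - b, p - 2*k + 2*a + 2*b) | p. 2*k - 2*a - 2*b \<le> p \<and> p \<le> k - a - 1}"

end

theory Submission
  imports Defs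
begin

text \<open>For \<open>\<mu> = (p + k - a - b, p - 2k + 2a + 2b)\<close> and \<open>\<nu> = (a - d\<^sub>1, b + d\<^sub>2)\<close> one finds
  \<open>\<A> = p + a + b + (2d\<^sub>2 - d\<^sub>1)/3\<close> and \<open>\<B> = p - k + 2a + 2b + (d\<^sub>2 - 2d\<^sub>1)/3\<close>, integers for
  the three shifts \<open>(d\<^sub>1, d\<^sub>2) = (1, 2), (2, 1), (1, -1)\<close>. The hypotheses on \<open>a, b, k, p\<close>
  then bound each of the nine quantities defining \<open>k\<^sub>0\<^sup>m\<^sup>i\<^sup>n\<close> by \<open>min(\<A>, \<B>, k)\<close>, so the
  multiplicity is at least 1.\<close>

definition k0min_terms :: "wt \<Rightarrow> wt \<Rightarrow> wt \<Rightarrow> int \<Rightarrow> int \<Rightarrow> int set" where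
  "k0min_terms lam mu nu A B =
     {fst lam + snd lam, fst mu + snd mu, fst nu + snd nu,
      A - fst lam, A - fst mu, A - snd nu, B - snd lam, B - snd mu, B - fst nu}"

lemma k0min_terms_finite_nonempty:
  "finite (k0min_terms lam mu nu A B)" "k0min_terms lam mu nu A B \<noteq> {}"
  by (simp_all add: k0min_terms_def)

lemma k0min_of_int:
  assumes "fusA lam mu nu = of_int A" and "fusB lam mu nu = of_int B"
  shows "k0min lam mu nu = of_int (Max (k0min_terms lam mu nu A B))"
proof -
  have "k0min lam mu nu = Max (of_int ` k0min_terms lam mu nu A B)"
    unfolding k0min_def k0min_terms_def Let_def assms
    by (simp only: image_insert image_empty of_int_add of_int_diff)
  also have "\<dots> = of_int (Max (k0min_terms lam mu nu A B))"
    by (rule mono_Max_commute[symmetric, OF _ k0min_terms_finite_nonempty]) (simp add: mono_def)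
  finally show ?thesis .
qed

lemma fusN_ge_1:
  assumes A: "fusA lam mu nu = of_int A" and B: "fusB lam mu nu = of_int B"
    and "0 \<le> A" "0 \<le> B"
    and bounds: "\<forall>x \<in> k0min_terms lam mu nu A B. x \<le> min (min A B) k"
  shows "fusN k lam mu nu \<ge> 1"
proof -
  have kmax: "k0max lam mu nu = of_int (min A B)"
    unfolding k0max_def A B by simp
  have "Max (k0min_terms lam mu nu A B) \<le> min (min A B) k"
    using bounds by (intro Max.boundedI k0min_terms_finite_nonempty) blast
  then have "k0min lam mu nu \<le> k0max lam mu nu" "k0min lam mu nu \<le> of_int k"
    and "min (k0max lam mu nu) (of_int k) - k0min lam mu nu + 1 \<ge> 1"
    unfolding k0min_of_int[OF A B] kmax by (simp_all add: of_int_min)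
  then show ?thesis
    using \<open>0 \<le> A\<close> \<open>0 \<le> B\<close> unfolding fusN_def Let_def A B by simp
qed

lemma mem_fusR_if_bounds:
  assumes "nu \<in> Pplus k"
    and "fusA lam mu nu = of_int A" "fusB lam mu nu = of_int B" "0 \<le> A" "0 \<le> B"
    and "\<forall>x \<in> k0min_terms lam mu nu A B. x \<le> min (min A B) k"
  shows "nu \<in> fusR k lam mu"
  using fusN_ge_1[OF assms(2-)] assms(1) unfolding fusR_def by auto

lemma Q3bar_weights_mem_fusR:
  fixes a b k p :: int
  assumes "b \<le> a" and "2 \<le> b" and "a + b + 1 \<le> k" and "k \<le> a + 2*b - 1"
    and "2*k - 2*a - 2*b \<le> p" and "p \<le> k - a - 1"
    and "nu \<in> {(a - 1, b + 2), (a - 2, b + 1), (a - 1, b - 1)}"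
  shows "nu \<in> fusR k (a, b) (p + k - a - b, p - 2*k + 2*a + 2*b)"
proof -
  let ?mu = "(p + k - a - b, p - 2*k + 2*a + 2*b)"
  consider "nu = (a - 1, b + 2)" | "nu = (a - 2, b + 1)" | "nu = (a - 1, b - 1)"
    using assms(7) by blast
  then show ?thesis
  proof cases
    case 1
    show ?thesis unfolding 1
    proof (rule mem_fusR_if_bounds[where A = "p + a + b + 1" and B = "p - k + 2*a + 2*b"])
      show "fusA (a, b) ?mu (a - 1, b + 2) = of_int (p + a + b + 1)"
        unfolding fusA_def by (simp add: field_simps)
      show "fusB (a, b) ?mu (a - 1, b + 2) = of_int (p - k + 2*a + 2*b)"
        unfolding fusB_def by (simp add: field_simps)
    qed (use assms(1-6) in \<open>simp_all add: Pplus_def k0min_terms_def\<close>)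
  next
    case 2
    show ?thesis unfolding 2
    proof (rule mem_fusR_if_bounds[where A = "p + a + b" and B = "p - k + 2*a + 2*b - 1"])
      show "fusA (a, b) ?mu (a - 2, b + 1) = of_int (p + a + b)"
        unfolding fusA_def by (simp add: field_simps)
      show "fusB (a, b) ?mu (a - 2, b + 1) = of_int (p - k + 2*a + 2*b - 1)"
        unfolding fusB_def by (simp add: field_simps)
    qed (use assms(1-6) in \<open>simp_all add: Pplus_def k0min_terms_def\<close>)
  next
    case 3
    show ?thesis unfolding 3
    proof (rule mem_fusR_if_bounds[where A = "p + a + b - 1" and B = "p - k + 2*a + 2*b - 1"])
      show "fusA (a, b) ?mu (a - 1, b - 1) = of_int (p + a + b - 1)"
        unfolding fusA_def by (simp add: field_simps)
      show "fusB (a, b) ?mu (a - 1, b - 1) = of_int (p - k + 2*a + 2*b - 1)"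
        unfolding fusB_def by (simp add: field_simps)
    qed (use assms(1-6) in \<open>simp_all add: Pplus_def k0min_terms_def\<close>)
  qed
qed

theorem mainTheorem12:
  fixes a b k :: int
  assumes "a \<ge> b" and "b \<ge> 2" and "a + b + 1 \<le> k" and "k \<le> a + 2*b - 1"
  shows "\<forall>(i, j) \<in> Q3bar a b k.
           (a - 1, b + 2) \<in> fusR k (a, b) (i, j) \<and>
           (a - 2, b + 1) \<in> fusR k (a, b) (i, j) \<and>
           (a - 1, b - 1) \<in> fusR k (a, b) (i, j)"
proof (intro ballI)
  fix ij assume "ij \<in> Q3bar a b k"
  then obtain p where ij: "ij = (p + k - a - b, p - 2*k + 2*a + 2*b)"
    and p: "2*k - 2*a - 2*b \<le> p" "p \<le> k - a - 1"
    unfolding Q3bar_def by blast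
  show "case ij of (i, j) \<Rightarrow>
           (a - 1, b + 2) \<in> fusR k (a, b) (i, j) \<and>
           (a - 2, b + 1) \<in> fusR k (a, b) (i, j) \<and>
           (a - 1, b - 1) \<in> fusR k (a, b) (i, j)"
    unfolding ij prod.case by (intro conjI Q3bar_weights_mem_fusR[OF assms p]) simp_all
qed

end
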